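(* Let $K$ be a nonempty finite set and $X=\Delta(K)$. 1. For each finite set $S$, the posterior mapping $\psi_S$ is $1$-Lipschitz from $(\Delta(K\times S),\|\cdot\|_1)$ to $(\Delta_f(X),d_* )$. 2. For all $u,v\in\Delta_f(X)$, $$d_*(u,v)=\inf\{\|\pi-\pi'\|_1:\ S\text{ finite},\ \pi,\pi'\in\Delta(K\times S),\ \psi_S(\pi)=u,\ \psi_S(\pi')=v\}.$$
   Context: $\Delta_f(X)$ is the set of finitely supported probabilities on $X=\Delta(K)$. For $\pi\in\Delta(K\times S)$, $\|\pi\|_1=\sum_{k,s}|\pi(k,s)|$. For a finite set $S$, $\psi_S:\Delta(K\times S)\to\Delta_f(X)$ is defined by $\psi_S(\pi)=\sum_{s\in S}\pi(s)\delta_{p(s)}$, where: - $\pi(s)=\sum_k\pi(k,s)$, and - $p(s)\in X$ is given by $p^k(s)=\pi(k,s)/\pi(s)$ (arbitrary if $\pi(s)=0$). $D_1=\{f\in\mathcal C(X):\ \forall x,y\in X,\ \forall a,b\ge0,\ af(x)-bf(y)\le\|ax-by\|_1\}$, and $d_*(u,v)=\sup_{f\in D_1}\big(u(f)-v(f)\big)$ with $u(f)=\sum_xu(x)f(x)$. *)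

theory Defs
  imports "HOL-Analysis.Analysis"
begin

text \<open>K is modelled as a finite (hence nonempty) type 'k. X = Delta(K) is the DeltaK.\<close>

definition DeltaK :: "('k::finite \<Rightarrow> real) set" where
  "DeltaK = {x. (\<forall>k. 0 \<le> x k) \<and> (\<Sum>k\<in>UNIV. x k) = 1}"

definition DeltaF :: "(('k::finite \<Rightarrow> real) \<Rightarrow> real) set" where
  "DeltaF = {u. finite {x. u x \<noteq> 0} \<and> (\<forall>x. 0 \<le> u x) \<and> {x. u x \<noteq> 0} \<subseteq> DeltaK
              \<and> (\<Sum>x\<in>{x. u x \<noteq> 0}. u x) = 1}"

definition DeltaKS :: "'s set \<Rightarrow> ('k::finite \<times> 's \<Rightarrow> real) set" where
  "DeltaKS S = {\<pi>. (\<forall>ks. 0 \<le> \<pi> ks) \<and> (\<forall>k s. s \<notin> S \<longrightarrow> \<pi> (k, s) = 0)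
                 \<and> (\<Sum>ks\<in>UNIV \<times> S. \<pi> ks) = 1}"

definition l1dist :: "'s set \<Rightarrow> ('k::finite \<times> 's \<Rightarrow> real) \<Rightarrow> ('k \<times> 's \<Rightarrow> real) \<Rightarrow> real" where
  "l1dist S \<pi> \<pi>' = (\<Sum>ks\<in>UNIV \<times> S. \<bar>\<pi> ks - \<pi>' ks\<bar>)"

definition marg :: "('k::finite \<times> 's \<Rightarrow> real) \<Rightarrow> 's \<Rightarrow> real" where
  "marg \<pi> s = (\<Sum>k\<in>UNIV. \<pi> (k, s))"

text \<open>Posterior p(s); when marg = 0 it is the (arbitrary) zero vector, irrelevant since the weight is 0.\<close>
definition post :: "('k::finite \<times> 's \<Rightarrow> real) \<Rightarrow> 's \<Rightarrow> ('k \<Rightarrow> real)" where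
  "post \<pi> s = (\<lambda>k. \<pi> (k, s) / marg \<pi> s)"

text \<open>psi_S(pi) = sum_s pi(s) delta_{p(s)}, as a weight function on X.\<close>
definition psi :: "'s set \<Rightarrow> ('k::finite \<times> 's \<Rightarrow> real) \<Rightarrow> ('k \<Rightarrow> real) \<Rightarrow> real" where
  "psi S \<pi> x = (\<Sum>s\<in>{s\<in>S. post \<pi> s = x}. marg \<pi> s)"

definition norm1 :: "('k::finite \<Rightarrow> real) \<Rightarrow> real" where
  "norm1 x = (\<Sum>k\<in>UNIV. \<bar>x k\<bar>)"

definition D1 :: "(('k::finite \<Rightarrow> real) \<Rightarrow> real) set" where
  "D1 = {f. continuous_on DeltaK f \<and>
            (\<forall>x\<in>DeltaK. \<forall>y\<in>DeltaK. \<forall>a b. 0 \<le> a \<longrightarrow> 0 \<le> b \<longrightarrow>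
               a * f x - b * f y \<le> norm1 (\<lambda>k. a * x k - b * y k))}"

definition integ :: "(('k::finite \<Rightarrow> real) \<Rightarrow> real) \<Rightarrow> (('k \<Rightarrow> real) \<Rightarrow> real) \<Rightarrow> real" where
  "integ u f = (\<Sum>x\<in>{x. u x \<noteq> 0}. u x * f x)"

definition dstar :: "(('k::finite \<Rightarrow> real) \<Rightarrow> real) \<Rightarrow> (('k \<Rightarrow> real) \<Rightarrow> real) \<Rightarrow> real" where
  "dstar u v = (SUP f\<in>D1. integ u f - integ v f)"

end

theory Submission
  imports Defs
begin

text \<open>
  Part 1. For f in D1 and nonnegative vectors P, Q on K, the defining inequality of D1,
  applied to the normalised vectors, gives |P| f(P/|P|) - |Q| f(Q/|Q|) <= ||P - Q||_1, also
  when a mass is zero. Summing this over the signals s in S bounds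
  integ (psi S pi) f - integ (psi S pi') f by ||pi - pi'||_1.

  Part 2. By Part 1 every cost in the infimum is at least d_*(u, v), so it suffices to
  exhibit joint distributions at distance at most d_*(u, v). With I, J the supports of u, v,
  a transport plan is a pair of weights gamma, delta >= 0 on I x J with row sums u and column
  sums v; it defines joint distributions over the signal set I x J (re-indexed into nat) with
  posterior distributions u, v and l1 distance sum_ij ||gamma_ij i - delta_ij j||_1.
  Finding a plan of cost at most d_*(u, v) is a finite system of linear inequalities. By
  Farkas' lemma, proved below by Fourier-Motzkin elimination, it is solvable unless a dual
  certificate exists; a dual certificate yields potentials F on I and G on J with
  t F(i) - G(j) <= ||t i - j||_1, and the McShane-type extension cone_ext I F belongs to D1,
  dominates F on I and is dominated by G on J. Integrating it against u and v shows that the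
  certificate cannot beat d_*(u, v).
\<close>

section \<open>Farkas' lemma by Fourier-Motzkin elimination\<close>

text \<open>A linear constraint sum_v a(v) x(v) <= b is represented by its row (a, b).\<close>
type_synonym 'v row = "('v \<Rightarrow> real) \<times> real"

definition lin_feasible :: "'v set \<Rightarrow> 'v row set \<Rightarrow> bool" where
  "lin_feasible V C \<longleftrightarrow> (\<exists>x. \<forall>r\<in>C. (\<Sum>v\<in>V. fst r v * x v) \<le> snd r)"

definition farkas_dual :: "'v set \<Rightarrow> 'v row set \<Rightarrow> bool" where
  "farkas_dual V C \<longleftrightarrow> (\<forall>l. (\<forall>r\<in>C. 0 \<le> l r) \<longrightarrow> (\<forall>v\<in>V. (\<Sum>r\<in>C. l r * fst r v) = 0)
                            \<longrightarrow> 0 \<le> (\<Sum>r\<in>C. l r * snd r))"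

definition cone_comb :: "'v row set \<Rightarrow> 'v row \<Rightarrow> bool" where
  "cone_comb C r' \<longleftrightarrow> (\<exists>W. (\<forall>r\<in>C. 0 \<le> W r) \<and> (\<forall>v. fst r' v = (\<Sum>r\<in>C. W r * fst r v))
                          \<and> snd r' = (\<Sum>r\<in>C. W r * snd r))"

lemma farkas_dual_transfer:
  assumes comb: "\<And>r'. r' \<in> C' \<Longrightarrow> cone_comb C r'"
    and zero: "\<And>r'. r' \<in> C' \<Longrightarrow> fst r' w = 0"
    and dual: "farkas_dual (insert w V) C"
  shows "farkas_dual V C'"
  unfolding farkas_dual_def
proof (intro allI impI)
  fix l assume l0: "\<forall>r\<in>C'. 0 \<le> l r" and lV: "\<forall>v\<in>V. (\<Sum>r\<in>C'. l r * fst r v) = 0"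
  have "\<forall>r'\<in>C'. \<exists>W. (\<forall>r\<in>C. 0 \<le> W r) \<and> (\<forall>v. fst r' v = (\<Sum>r\<in>C. W r * fst r v))
                       \<and> snd r' = (\<Sum>r\<in>C. W r * snd r)"
    using comb unfolding cone_comb_def by blast
  then obtain W where W: "\<forall>r'\<in>C'. (\<forall>r\<in>C. 0 \<le> W r' r) \<and> (\<forall>v. fst r' v = (\<Sum>r\<in>C. W r' r * fst r v))
                       \<and> snd r' = (\<Sum>r\<in>C. W r' r * snd r)"
    by (rule bchoice[elim_format]) blast
  then have W0: "\<And>r' r. r' \<in> C' \<Longrightarrow> r \<in> C \<Longrightarrow> 0 \<le> W r' r"
    and Wfst: "\<And>r' v. r' \<in> C' \<Longrightarrow> fst r' v = (\<Sum>r\<in>C. W r' r * fst r v)"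
    and Wsnd: "\<And>r'. r' \<in> C' \<Longrightarrow> snd r' = (\<Sum>r\<in>C. W r' r * snd r)"
    by auto
  define L where "L r = (\<Sum>r'\<in>C'. l r' * W r' r)" for r
  have pull: "(\<Sum>r\<in>C. L r * g r) = (\<Sum>r'\<in>C'. l r' * (\<Sum>r\<in>C. W r' r * g r))" for g
  proof -
    have "(\<Sum>r\<in>C. L r * g r) = (\<Sum>r\<in>C. \<Sum>r'\<in>C'. l r' * (W r' r * g r))"
      unfolding L_def by (simp add: sum_distrib_right mult.assoc)
    also have "\<dots> = (\<Sum>r'\<in>C'. l r' * (\<Sum>r\<in>C. W r' r * g r))"
      by (subst sum.swap) (simp add: sum_distrib_left)
    finally show ?thesis .
  qed
  have "0 \<le> (\<Sum>r\<in>C. L r * snd r)"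
  proof (rule dual[unfolded farkas_dual_def, rule_format])
    show "0 \<le> L r" if "r \<in> C" for r
      unfolding L_def using l0 W0 that by (intro sum_nonneg mult_nonneg_nonneg) auto
    show "(\<Sum>r\<in>C. L r * fst r v) = 0" if "v \<in> insert w V" for v
    proof -
      have "(\<Sum>r\<in>C. L r * fst r v) = (\<Sum>r'\<in>C'. l r' * fst r' v)" by (simp add: pull Wfst[symmetric])
      also have "\<dots> = 0" using that lV zero by (cases "v = w") simp_all
      finally show ?thesis .
    qed
  qed
  then show "0 \<le> (\<Sum>r\<in>C'. l r * snd r)" by (simp add: pull Wsnd[symmetric])
qed

text \<open>Solving a system in a single unknown t: the constraints a r * t <= d r are compatible iff
  every lower bound is below every upper bound.\<close>
lemma one_variable_elimination:
  fixes a d :: "'r \<Rightarrow> real"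
  assumes finC: "finite C"
    and zero: "\<And>r. r \<in> C \<Longrightarrow> a r = 0 \<Longrightarrow> 0 \<le> d r"
    and pair: "\<And>p n. p \<in> C \<Longrightarrow> n \<in> C \<Longrightarrow> a p > 0 \<Longrightarrow> a n < 0 \<Longrightarrow> 0 \<le> - a n * d p + a p * d n"
  shows "\<exists>t. \<forall>r\<in>C. a r * t \<le> d r"
proof -
  define P where "P = {p\<in>C. a p > 0}"
  define N where "N = {n\<in>C. a n < 0}"
  have finPN: "finite P" "finite N" using finC by (auto simp: P_def N_def)
  have ratio: "d n / a n \<le> d p / a p" if "p \<in> P" "n \<in> N" for p n
    using pair[of p n] that by (simp add: P_def N_def divide_simps) (smt (verit) mult.commute)
  define t where "t = (if P = {} then (if N = {} then 0 else Max ((\<lambda>r. d r / a r) ` N))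
                       else Min ((\<lambda>r. d r / a r) ` P))"
  have tP: "t \<le> d p / a p" if "p \<in> P" for p
    using that finPN by (auto simp: t_def)
  have tN: "d n / a n \<le> t" if "n \<in> N" for n
    using that finPN ratio by (auto simp: t_def Min_ge_iff)
  have "a r * t \<le> d r" if r: "r \<in> C" for r
  proof -
    consider "a r = 0" | "a r > 0" | "a r < 0" by linarith
    then show ?thesis
    proof cases
      case 1 then show ?thesis using zero r by simp
    next
      case 2 then show ?thesis using tP[of r] r by (simp add: P_def le_divide_eq mult.commute)
    next
      case 3 then show ?thesis using tN[of r] r by (simp add: N_def divide_le_eq mult.commute)
    qed
  qed
  then show ?thesis by blast
qed

text \<open>Combination of a row p with positive and a row n with negative coefficient at w, in which w
  cancels.\<close>
definition fm_comb :: "'v \<Rightarrow> 'v row \<Rightarrow> 'v row \<Rightarrow> 'v row" where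
  "fm_comb w p n = ((\<lambda>v. - fst n w * fst p v + fst p w * fst n v), - fst n w * snd p + fst p w * snd n)"

definition fm_elim :: "'v \<Rightarrow> 'v row set \<Rightarrow> 'v row set" where
  "fm_elim w C = {r\<in>C. fst r w = 0}
     \<union> (\<lambda>(p, n). fm_comb w p n) ` ({p\<in>C. fst p w > 0} \<times> {n\<in>C. fst n w < 0})"

lemma finite_fm_elim: "finite C \<Longrightarrow> finite (fm_elim w C)"
  by (simp add: fm_elim_def)

lemma fm_elim_zero: "r \<in> fm_elim w C \<Longrightarrow> fst r w = 0"
  by (auto simp: fm_elim_def fm_comb_def)

lemma fm_elim_cone_comb:
  assumes finC: "finite C" and r': "r' \<in> fm_elim w C"
  shows "cone_comb C r'"
proof (cases "r' \<in> C")
  case True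
  define W where "W r = (if r = r' then 1 else 0 :: real)" for r
  have "(\<Sum>r\<in>C. W r * g r) = (\<Sum>r\<in>C. if r = r' then g r else 0)" for g
    by (rule sum.cong) (auto simp: W_def)
  then have W_sum: "(\<Sum>r\<in>C. W r * g r) = g r'" for g
    using True finC by simp
  then show ?thesis unfolding cone_comb_def by (intro exI[of _ W]) (auto simp: W_def W_sum)
next
  case False
  then obtain p n where p: "p \<in> C" "fst p w > 0" and n: "n \<in> C" "fst n w < 0"
    and r'_eq: "r' = fm_comb w p n"
    using r' by (auto simp: fm_elim_def)
  have "p \<noteq> n" using p n by auto
  define W where "W r = (if r = p then - fst n w else 0) + (if r = n then fst p w else 0)" for r
  have W_sum: "(\<Sum>r\<in>C. W r * g r) = - fst n w * g p + fst p w * g n" for g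
  proof -
    have "(\<Sum>r\<in>C. W r * g r)
        = (\<Sum>r\<in>C. (if r = p then - fst n w * g r else 0) + (if r = n then fst p w * g r else 0))"
      by (rule sum.cong) (auto simp: W_def)
    then show ?thesis using p n finC by (simp add: sum.distrib)
  qed
  have "\<forall>r\<in>C. 0 \<le> W r" using p n by (simp add: W_def)
  then show ?thesis unfolding cone_comb_def r'_eq
    by (intro exI[of _ W]) (simp add: W_sum fm_comb_def)
qed

lemma fm_elim_feasible:
  assumes finC: "finite C" and w: "w \<notin> V" and finV: "finite V"
    and feas: "lin_feasible V (fm_elim w C)"
  shows "lin_feasible (insert w V) C"
proof -
  obtain x where x: "\<And>r. r \<in> fm_elim w C \<Longrightarrow> (\<Sum>v\<in>V. fst r v * x v) \<le> snd r"
    using feas by (auto simp: lin_feasible_def)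
  define d where "d r = snd r - (\<Sum>v\<in>V. fst r v * x v)" for r
  have "\<exists>t. \<forall>r\<in>C. fst r w * t \<le> d r"
  proof (rule one_variable_elimination[OF finC])
    show "0 \<le> d r" if "r \<in> C" "fst r w = 0" for r
      using x[of r] that by (simp add: fm_elim_def d_def)
    show "0 \<le> - fst n w * d p + fst p w * d n"
      if "p \<in> C" "n \<in> C" "fst p w > 0" "fst n w < 0" for p n
    proof -
      have "fm_comb w p n \<in> fm_elim w C" using that unfolding fm_elim_def by force
      from x[OF this] show ?thesis
        by (simp add: fm_comb_def d_def algebra_simps sum.distrib sum_distrib_left sum_subtractf sum_negf)
    qed
  qed
  then obtain t where t: "\<And>r. r \<in> C \<Longrightarrow> fst r w * t \<le> d r" by blast
  have extend: "(\<Sum>v\<in>insert w V. fst r v * (x(w := t)) v) = fst r w * t + (\<Sum>v\<in>V. fst r v * x v)" for r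
  proof -
    have "(\<Sum>v\<in>V. fst r v * (x(w := t)) v) = (\<Sum>v\<in>V. fst r v * x v)"
      using w by (intro sum.cong) auto
    then show ?thesis using w finV by simp
  qed
  have "(\<Sum>v\<in>insert w V. fst r v * (x(w := t)) v) \<le> snd r" if "r \<in> C" for r
    unfolding extend using t[OF that] by (simp add: d_def)
  then show ?thesis unfolding lin_feasible_def by blast
qed

theorem farkas_rows:
  assumes "finite V" "finite C" "farkas_dual V C"
  shows "lin_feasible V C"
  using assms
proof (induction V arbitrary: C rule: finite_induct)
  case empty
  have "0 \<le> snd r" if r: "r \<in> C" for r
  proof -
    define l where "l r' = (if r' = r then 1 else 0 :: real)" for r'
    have "0 \<le> (\<Sum>r'\<in>C. l r' * snd r')"
      using empty.prems(2)[unfolded farkas_dual_def, rule_format, of l] by (simp add: l_def)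
    also have "(\<Sum>r'\<in>C. l r' * snd r') = (\<Sum>r'\<in>C. if r' = r then snd r' else 0)"
      by (rule sum.cong) (auto simp: l_def)
    finally show ?thesis using r empty.prems(1) by simp
  qed
  then show ?case by (simp add: lin_feasible_def)
next
  case (insert w V)
  have "lin_feasible V (fm_elim w C)"
  proof (rule insert.IH)
    show "finite (fm_elim w C)" using insert.prems(1) by (rule finite_fm_elim)
    show "farkas_dual V (fm_elim w C)"
      by (rule farkas_dual_transfer[OF fm_elim_cone_comb[OF insert.prems(1)] fm_elim_zero insert.prems(2)])
  qed
  then show ?case by (rule fm_elim_feasible[OF insert.prems(1) insert.hyps(2,1)])
qed

text \<open>Farkas' lemma for an indexed system; coinciding rows are merged and their multipliers shared
  evenly.\<close>
theorem farkas:
  fixes A :: "'c \<Rightarrow> 'v \<Rightarrow> real" and b :: "'c \<Rightarrow> real"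
  assumes finV: "finite V" and finC: "finite C"
    and dual: "\<And>l. (\<forall>c\<in>C. 0 \<le> l c) \<Longrightarrow> (\<forall>v\<in>V. (\<Sum>c\<in>C. l c * A c v) = 0)
                    \<Longrightarrow> 0 \<le> (\<Sum>c\<in>C. l c * b c)"
  shows "\<exists>x. \<forall>c\<in>C. (\<Sum>v\<in>V. A c v * x v) \<le> b c"
proof -
  define row where "row c = (A c, b c)" for c
  define mult where "mult c = real (card {c'\<in>C. row c' = row c})" for c
  have spread: "(\<Sum>c\<in>C. l (row c) / mult c * g (row c)) = (\<Sum>r\<in>row ` C. l r * g r)" for l g
  proof -
    have "(\<Sum>c\<in>C. l (row c) / mult c * g (row c))
        = (\<Sum>r\<in>row ` C. \<Sum>c\<in>{c\<in>C. row c = r}. l r / card {c\<in>C. row c = r} * g r)"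
      unfolding mult_def by (rule sum.image_gen[OF finC, of _ row, THEN trans]) (intro sum.cong; simp)
    also have "\<dots> = (\<Sum>r\<in>row ` C. l r * g r)"
    proof (rule sum.cong[OF refl])
      fix r assume "r \<in> row ` C"
      then have "{c\<in>C. row c = r} \<noteq> {}" by auto
      then show "(\<Sum>c\<in>{c\<in>C. row c = r}. l r / card {c\<in>C. row c = r} * g r) = l r * g r"
        using finC by (simp add: card_gt_0_iff)
    qed
    finally show ?thesis .
  qed
  have "farkas_dual V (row ` C)"
    unfolding farkas_dual_def
  proof (intro allI impI)
    fix l assume l0: "\<forall>r\<in>row ` C. 0 \<le> l r" and lV: "\<forall>v\<in>V. (\<Sum>r\<in>row ` C. l r * fst r v) = 0"
    have "0 \<le> (\<Sum>c\<in>C. l (row c) / mult c * b c)"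
    proof (rule dual)
      show "\<forall>c\<in>C. 0 \<le> l (row c) / mult c" using l0 by (auto simp: mult_def)
      show "\<forall>v\<in>V. (\<Sum>c\<in>C. l (row c) / mult c * A c v) = 0"
        using lV spread[of l "\<lambda>r. fst r v" for v] by (simp add: row_def)
    qed
    then show "0 \<le> (\<Sum>r\<in>row ` C. l r * snd r)"
      using spread[of l snd] by (simp add: row_def)
  qed
  then have "lin_feasible V (row ` C)" using finV finC by (intro farkas_rows) auto
  then show ?thesis by (auto simp: lin_feasible_def row_def)
qed

section \<open>The class D1 and the Lipschitz property of psi\<close>

lemma D1E: "f \<in> D1 \<Longrightarrow> x \<in> DeltaK \<Longrightarrow> y \<in> DeltaK \<Longrightarrow> 0 \<le> a \<Longrightarrow> 0 \<le> b \<Longrightarrow>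
   a * f x - b * f y \<le> norm1 (\<lambda>k. a * x k - b * y k)"
  by (simp add: D1_def)

lemma zero_in_D1: "(\<lambda>_. 0) \<in> D1"
  by (auto simp: D1_def norm1_def intro: sum_nonneg)

lemma uniform_in_DeltaK: "(\<lambda>k. 1 / real CARD('k::finite)) \<in> (DeltaK :: ('k \<Rightarrow> real) set)"
  by (simp add: DeltaK_def)

lemma norm1_DeltaK: "x \<in> DeltaK \<Longrightarrow> norm1 x = 1"
  by (simp add: DeltaK_def norm1_def)

lemma D1_bound:
  assumes f: "f \<in> D1" and x: "x \<in> DeltaK"
  shows "\<bar>f x\<bar> \<le> 1"
proof -
  have "f x \<le> norm1 x" using D1E[OF f x x, of 1 0] by simp
  moreover have "- f x \<le> norm1 (\<lambda>k. - x k)" using D1E[OF f x x, of 0 1] by simp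
  moreover have "norm1 (\<lambda>k. - x k) = norm1 x" by (simp add: norm1_def)
  ultimately show ?thesis using norm1_DeltaK[OF x] by linarith
qed

lemma mass_decomposition:
  fixes P :: "'k::finite \<Rightarrow> real"
  assumes P: "\<And>k. 0 \<le> P k"
  obtains x where "x \<in> DeltaK" "\<And>k. sum P UNIV * x k = P k"
    "sum P UNIV * f (\<lambda>k. P k / sum P UNIV) = sum P UNIV * f x"
proof (cases "sum P UNIV = 0")
  case True
  then have "P k = 0" for k using P by (simp add: sum_nonneg_eq_0_iff)
  then show ?thesis using that[OF uniform_in_DeltaK] True by simp
next
  case False
  have "0 \<le> sum P UNIV" using P by (simp add: sum_nonneg)
  then have "(\<lambda>k. P k / sum P UNIV) \<in> DeltaK"
    using P False by (auto simp: DeltaK_def simp flip: sum_divide_distrib)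
  then show ?thesis using that False by simp
qed

lemma D1_weighted:
  fixes P Q :: "'k::finite \<Rightarrow> real"
  assumes f: "f \<in> D1" and P: "\<And>k. 0 \<le> P k" and Q: "\<And>k. 0 \<le> Q k"
  shows "sum P UNIV * f (\<lambda>k. P k / sum P UNIV) - sum Q UNIV * f (\<lambda>k. Q k / sum Q UNIV)
          \<le> (\<Sum>k\<in>UNIV. \<bar>P k - Q k\<bar>)"
proof -
  obtain x where x: "x \<in> DeltaK" "\<And>k. sum P UNIV * x k = P k"
    "sum P UNIV * f (\<lambda>k. P k / sum P UNIV) = sum P UNIV * f x"
    using mass_decomposition[where P=P and f=f, OF P] by blast
  obtain y where y: "y \<in> DeltaK" "\<And>k. sum Q UNIV * y k = Q k"
    "sum Q UNIV * f (\<lambda>k. Q k / sum Q UNIV) = sum Q UNIV * f y"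
    using mass_decomposition[where P=Q and f=f, OF Q] by blast
  have "0 \<le> sum P UNIV" "0 \<le> sum Q UNIV" using P Q by (auto intro: sum_nonneg)
  from D1E[OF f x(1) y(1) this] show ?thesis by (simp add: x y norm1_def)
qed

lemma integ_psi:
  assumes S: "finite S"
  shows "integ (psi S \<pi>) f = (\<Sum>s\<in>S. marg \<pi> s * f (post \<pi> s))"
proof -
  have supp: "{x. psi S \<pi> x \<noteq> 0} \<subseteq> post \<pi> ` S"
  proof
    fix x assume "x \<in> {x. psi S \<pi> x \<noteq> 0}"
    then have "{s\<in>S. post \<pi> s = x} \<noteq> {}" unfolding psi_def by (intro notI) auto
    then show "x \<in> post \<pi> ` S" by blast
  qed
  have "(\<Sum>s\<in>S. marg \<pi> s * f (post \<pi> s))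
      = (\<Sum>x\<in>post \<pi> ` S. \<Sum>s\<in>{s\<in>S. post \<pi> s = x}. marg \<pi> s * f (post \<pi> s))"
    by (rule sum.image_gen) (rule S)
  also have "\<dots> = (\<Sum>x\<in>post \<pi> ` S. psi S \<pi> x * f x)"
    unfolding psi_def by (intro sum.cong refl) (auto simp: sum_distrib_right)
  also have "\<dots> = (\<Sum>x\<in>{x. psi S \<pi> x \<noteq> 0}. psi S \<pi> x * f x)"
    by (rule sum.mono_neutral_right) (use S supp in auto)
  finally show ?thesis by (simp add: integ_def)
qed

theorem psi_lipschitz:
  fixes \<pi> \<pi>' :: "'k::finite \<times> 's \<Rightarrow> real"
  assumes S: "finite S" and p: "\<pi> \<in> DeltaKS S" and p': "\<pi>' \<in> DeltaKS S"
  shows "dstar (psi S \<pi>) (psi S \<pi>') \<le> l1dist S \<pi> \<pi>'"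
  unfolding dstar_def
proof (rule cSUP_least)
  show "(D1 :: (('k \<Rightarrow> real) \<Rightarrow> real) set) \<noteq> {}" using zero_in_D1 by blast
  fix f :: "('k \<Rightarrow> real) \<Rightarrow> real" assume f: "f \<in> D1"
  have "integ (psi S \<pi>) f - integ (psi S \<pi>') f
      = (\<Sum>s\<in>S. marg \<pi> s * f (post \<pi> s) - marg \<pi>' s * f (post \<pi>' s))"
    using S by (simp add: integ_psi sum_subtractf)
  also have "\<dots> \<le> (\<Sum>s\<in>S. \<Sum>k\<in>UNIV. \<bar>\<pi> (k, s) - \<pi>' (k, s)\<bar>)"
    using D1_weighted[OF f] p p' by (intro sum_mono) (simp add: marg_def post_def DeltaKS_def)
  also have "\<dots> = l1dist S \<pi> \<pi>'"
    unfolding l1dist_def by (subst sum.swap) (simp add: sum.cartesian_product)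
  finally show "integ (psi S \<pi>) f - integ (psi S \<pi>') f \<le> l1dist S \<pi> \<pi>'" .
qed

section \<open>Extension of potentials into D1\<close>

lemma l1_lipschitz_continuous_on:
  fixes f :: "('k::finite \<Rightarrow> real) \<Rightarrow> real"
  assumes L: "\<And>x y. x \<in> S \<Longrightarrow> y \<in> S \<Longrightarrow> \<bar>f x - f y\<bar> \<le> (\<Sum>k\<in>UNIV. \<bar>x k - y k\<bar>)"
  shows "continuous_on S f"
  unfolding continuous_on_def
proof
  fix x assume x: "x \<in> S"
  have c: "continuous_on UNIV (\<lambda>y::'k \<Rightarrow> real. \<Sum>k\<in>UNIV. \<bar>y k - x k\<bar>)"
    by (intro continuous_intros continuous_on_product_coordinates)
  have "((\<lambda>y. \<Sum>k\<in>UNIV. \<bar>y k - x k\<bar>) \<longlongrightarrow> (\<Sum>k\<in>UNIV. \<bar>x k - x k\<bar>)) (at x within S)"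
    using c by (meson continuous_on_def UNIV_I tendsto_within_subset subset_UNIV)
  then have t0: "((\<lambda>y. \<Sum>k\<in>UNIV. \<bar>y k - x k\<bar>) \<longlongrightarrow> 0) (at x within S)" by simp
  have "((\<lambda>y. f y - f x) \<longlongrightarrow> 0) (at x within S)"
  proof (rule Lim_null_comparison[OF _ t0])
    show "\<forall>\<^sub>F y in at x within S. norm (f y - f x) \<le> (\<Sum>k\<in>UNIV. \<bar>y k - x k\<bar>)"
      using L x by (auto simp: eventually_at_filter)
  qed
  then show "(f \<longlongrightarrow> f x) (at x within S)" by (simp add: LIM_zero_iff)
qed

lemma norm1_scale: "0 \<le> c \<Longrightarrow> c * norm1 w = norm1 (\<lambda>k. c * w k)"
  by (simp add: norm1_def sum_distrib_left abs_mult)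

lemma norm1_triangle: "norm1 (\<lambda>k. p k - q k) \<le> norm1 (\<lambda>k. p k - r k) + norm1 (\<lambda>k. r k - q k)"
  unfolding norm1_def by (simp flip: sum.distrib) (rule sum_mono, simp)

lemma norm1_mass_difference:
  assumes "x \<in> DeltaK" "z \<in> DeltaK"
  shows "s - a \<le> norm1 (\<lambda>k. s * x k - a * z k)"
proof -
  have "s - a = (\<Sum>k\<in>UNIV. s * x k - a * z k)"
    using assms by (simp add: DeltaK_def sum_subtractf flip: sum_distrib_left)
  also have "\<dots> \<le> norm1 (\<lambda>k. s * x k - a * z k)" unfolding norm1_def by (rule sum_mono) simp
  finally show ?thesis .
qed

lemma norm1_scaled_point: "z \<in> DeltaK \<Longrightarrow> 0 \<le> c \<Longrightarrow> norm1 (\<lambda>k. c * z k) = c"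
  using norm1_scale[of c z] norm1_DeltaK[of z] by simp

definition cone_gap :: "(('k::finite \<Rightarrow> real) \<Rightarrow> real) \<Rightarrow> ('k \<Rightarrow> real) \<Rightarrow> real \<Rightarrow> ('k \<Rightarrow> real) \<Rightarrow> real" where
  "cone_gap F i t z = t * F i - norm1 (\<lambda>k. t * i k - z k)"

text \<open>The extension of F from I: the supremum of the candidate values t F(i) - ||t i - z||_1 over
  i in I and t >= 0 (a McShane-type extension).\<close>
definition cone_ext :: "('k::finite \<Rightarrow> real) set \<Rightarrow> (('k \<Rightarrow> real) \<Rightarrow> real) \<Rightarrow> ('k \<Rightarrow> real) \<Rightarrow> real" where
  "cone_ext I F z = (SUP p\<in>I \<times> {0..}. cone_gap F (fst p) (snd p) z)"

lemma cone_gap_scale: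
  "0 \<le> c \<Longrightarrow> c * cone_gap F i t z = c * t * F i - norm1 (\<lambda>k. c * t * i k - c * z k)"
  using norm1_scale[of c "\<lambda>k. t * i k - z k"] by (simp add: cone_gap_def algebra_simps)

context
  fixes I :: "('k::finite \<Rightarrow> real) set" and F :: "('k \<Rightarrow> real) \<Rightarrow> real"
  assumes I_sub: "I \<subseteq> DeltaK" and I_ne: "I \<noteq> {}" and F_le_1: "\<And>i. i \<in> I \<Longrightarrow> F i \<le> 1"
begin

text \<open>All candidate values on the simplex are at most 1, so the supremum is finite and dominates
  each of them.\<close>
lemma cone_gap_le_one:
  assumes "i \<in> I" "0 \<le> t" "z \<in> DeltaK"
  shows "cone_gap F i t z \<le> 1"
proof -
  have "t - 1 \<le> norm1 (\<lambda>k. t * i k - 1 * z k)"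
    using assms I_sub by (intro norm1_mass_difference) auto
  moreover have "t * F i \<le> t" using assms F_le_1 by (simp add: mult_left_le)
  ultimately show ?thesis by (simp add: cone_gap_def)
qed

lemma cone_ext_upper:
  assumes "i \<in> I" "0 \<le> t" "z \<in> DeltaK"
  shows "cone_gap F i t z \<le> cone_ext I F z"
proof -
  have "bdd_above ((\<lambda>p. cone_gap F (fst p) (snd p) z) ` (I \<times> {0..}))"
    using cone_gap_le_one assms(3) by (intro bdd_aboveI2[of _ _ 1]) auto
  then show ?thesis unfolding cone_ext_def
    using assms cSUP_upper[of "(i, t)" "I \<times> {0..}" "\<lambda>p. cone_gap F (fst p) (snd p) z"] by simp
qed

text \<open>The candidate with t = 0 shows that the extension is at least -1.\<close>
lemma cone_ext_ge_minus_one: "z \<in> DeltaK \<Longrightarrow> - 1 \<le> cone_ext I F z"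
  using I_ne cone_ext_upper[of _ 0 z] norm1_scaled_point[of z 1]
  by (fastforce simp: cone_gap_def norm1_def)

lemma cone_gap_transport:
  assumes i: "i \<in> I" and t: "0 \<le> t" and x: "x \<in> DeltaK" and y: "y \<in> DeltaK"
    and a: "0 \<le> a" and b: "0 \<le> b"
  shows "a * cone_gap F i t x \<le> b * cone_ext I F y + norm1 (\<lambda>k. a * x k - b * y k)"
proof -
  define s where "s = a * t"
  have s: "0 \<le> s" using a t by (simp add: s_def)
  have "a * cone_gap F i t x = s * F i - norm1 (\<lambda>k. s * i k - a * x k)"
    using cone_gap_scale[OF a] by (simp add: s_def mult.assoc)
  also have "\<dots> \<le> b * cone_ext I F y + norm1 (\<lambda>k. a * x k - b * y k)"
  proof (cases "b = 0")
    case True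
    have "s - a \<le> norm1 (\<lambda>k. s * i k - a * x k)"
      using i I_sub x by (intro norm1_mass_difference) auto
    moreover have "s * F i \<le> s" using F_le_1[OF i] s by (simp add: mult_left_le)
    ultimately show ?thesis using True norm1_scaled_point[OF x a] by simp
  next
    case False
    then have "b > 0" using b by simp
    have "s * F i - norm1 (\<lambda>k. s * i k - b * y k) = b * cone_gap F i (s / b) y"
      using cone_gap_scale[OF b, of F i "s / b" y] \<open>b > 0\<close> by simp
    also have "\<dots> \<le> b * cone_ext I F y"
      using cone_ext_upper[OF i _ y] s b by (intro mult_left_mono) auto
    finally show ?thesis using norm1_triangle[of "\<lambda>k. s * i k" "\<lambda>k. b * y k" "\<lambda>k. a * x k"] by linarith
  qed
  finally show ?thesis .
qed

lemma cone_ext_homogeneous_lipschitz: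
  assumes x: "x \<in> DeltaK" and y: "y \<in> DeltaK" and a: "0 \<le> a" and b: "0 \<le> b"
  shows "a * cone_ext I F x - b * cone_ext I F y \<le> norm1 (\<lambda>k. a * x k - b * y k)"
proof (cases "a = 0")
  case True
  then show ?thesis
    using mult_left_mono[OF cone_ext_ge_minus_one[OF y] b] norm1_scale[OF b, of "\<lambda>k. - y k"]
      norm1_scaled_point[OF y b] by (simp add: norm1_def)
next
  case False
  then have "a > 0" using a by simp
  have "cone_ext I F x \<le> (b * cone_ext I F y + norm1 (\<lambda>k. a * x k - b * y k)) / a"
    unfolding cone_ext_def[of I F x]
  proof (rule cSUP_least)
    show "I \<times> {0::real..} \<noteq> {}" using I_ne by force
    fix p assume "p \<in> I \<times> {0::real..}"
    then show "cone_gap F (fst p) (snd p) x \<le> (b * cone_ext I F y + norm1 (\<lambda>k. a * x k - b * y k)) / a"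
      using cone_gap_transport[OF _ _ x y a b] \<open>a > 0\<close> by (auto simp: le_divide_eq mult.commute)
  qed
  then show ?thesis using \<open>a > 0\<close> by (simp add: le_divide_eq mult.commute)
qed

lemma cone_ext_in_D1: "cone_ext I F \<in> D1"
proof -
  have "continuous_on DeltaK (cone_ext I F)"
  proof (rule l1_lipschitz_continuous_on)
    fix x y :: "'k \<Rightarrow> real" assume x: "x \<in> DeltaK" and y: "y \<in> DeltaK"
    show "\<bar>cone_ext I F x - cone_ext I F y\<bar> \<le> (\<Sum>k\<in>UNIV. \<bar>x k - y k\<bar>)"
      using cone_ext_homogeneous_lipschitz[OF x y, of 1 1] cone_ext_homogeneous_lipschitz[OF y x, of 1 1]
      by (simp add: norm1_def abs_minus_commute abs_le_iff)
  qed
  then show ?thesis using cone_ext_homogeneous_lipschitz by (auto simp: D1_def)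
qed

lemma cone_ext_extends: "i \<in> I \<Longrightarrow> F i \<le> cone_ext I F i"
  using cone_ext_upper[of i 1 i] I_sub by (auto simp: cone_gap_def norm1_def)

lemma cone_ext_below:
  assumes j: "j \<in> DeltaK"
    and G: "\<And>i t. i \<in> I \<Longrightarrow> 0 \<le> t \<Longrightarrow> t * F i - G \<le> norm1 (\<lambda>k. t * i k - j k)"
  shows "cone_ext I F j \<le> G"
  unfolding cone_ext_def
proof (rule cSUP_least)
  show "I \<times> {0::real..} \<noteq> {}" using I_ne by force
  fix p assume "p \<in> I \<times> {0::real..}"
  then show "cone_gap F (fst p) (snd p) j \<le> G" using G[of "fst p" "snd p"] by (auto simp: cone_gap_def)
qed

end

section \<open>Weak duality\<close>

lemma sum_mult_le_norm1:
  assumes "\<And>k. \<bar>h k\<bar> \<le> L"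
  shows "(\<Sum>k\<in>UNIV. h k * z k) \<le> L * norm1 z"
proof -
  have "h k * z k \<le> L * \<bar>z k\<bar>" for k
    using mult_right_mono[OF assms[of k] abs_ge_zero[of "z k"]] by (metis abs_ge_self abs_mult order_trans)
  then show ?thesis by (simp add: norm1_def sum_distrib_left sum_mono)
qed

text \<open>For f in D1 the integral against a probability in DeltaF lies in [-1, 1], so the supremum
  defining d_* is finite.\<close>
lemma integ_abs_le_one:
  assumes u: "u \<in> DeltaF" and f: "f \<in> D1"
  shows "\<bar>integ u f\<bar> \<le> 1"
proof -
  have "\<bar>integ u f\<bar> \<le> (\<Sum>x\<in>{x. u x \<noteq> 0}. u x * \<bar>f x\<bar>)"
    unfolding integ_def using u by (auto simp: DeltaF_def abs_mult intro: order_trans[OF sum_abs])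
  also have "\<dots> \<le> (\<Sum>x\<in>{x. u x \<noteq> 0}. u x)"
    using u D1_bound[OF f] by (intro sum_mono) (auto simp: DeltaF_def mult_left_le)
  finally show ?thesis using u by (simp add: DeltaF_def)
qed

lemma dstar_upper:
  assumes u: "u \<in> DeltaF" and v: "v \<in> DeltaF" and f: "f \<in> D1"
  shows "integ u f - integ v f \<le> dstar u v"
proof -
  have "bdd_above ((\<lambda>f. integ u f - integ v f) ` D1)"
    using integ_abs_le_one[OF u] integ_abs_le_one[OF v] by (intro bdd_aboveI2[of _ _ 2]) fastforce
  then show ?thesis unfolding dstar_def using f by (rule cSUP_upper[rotated])
qed

text \<open>Potentials F = -rho/L and G = sigma/L extracted from a dual certificate satisfy the
  hypotheses of the extension.\<close>
lemma certificate_potentials: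
  fixes I J :: "('k::finite \<Rightarrow> real) set"
  assumes J_ne: "J \<noteq> {}" and I_sub: "I \<subseteq> DeltaK" and L: "0 < L"
    and h: "\<And>i j k. i \<in> I \<Longrightarrow> j \<in> J \<Longrightarrow> \<bar>h i j k\<bar> \<le> L"
    and src: "\<And>i j. i \<in> I \<Longrightarrow> j \<in> J \<Longrightarrow> 0 \<le> \<rho> i + (\<Sum>k\<in>UNIV. h i j k * i k)"
    and tgt: "\<And>i j. i \<in> I \<Longrightarrow> j \<in> J \<Longrightarrow> 0 \<le> \<sigma> j - (\<Sum>k\<in>UNIV. h i j k * j k)"
  shows "\<And>i. i \<in> I \<Longrightarrow> - \<rho> i / L \<le> 1"
    and "\<And>i j t. i \<in> I \<Longrightarrow> j \<in> J \<Longrightarrow> 0 \<le> t \<Longrightarrow>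
           t * (- \<rho> i / L) - \<sigma> j / L \<le> norm1 (\<lambda>k. t * i k - j k)"
proof -
  fix i assume i: "i \<in> I"
  obtain j where j: "j \<in> J" using J_ne by blast
  have "- \<rho> i \<le> (\<Sum>k\<in>UNIV. h i j k * i k)" using src[OF i j] by simp
  also have "\<dots> \<le> L * norm1 i" by (rule sum_mult_le_norm1) (rule h[OF i j])
  also have "norm1 i = 1" using i I_sub norm1_DeltaK by blast
  finally show "- \<rho> i / L \<le> 1" using L by (simp add: le_divide_eq)
next
  fix i j and t :: real assume i: "i \<in> I" and j: "j \<in> J" and t: "0 \<le> t"
  have "- (t * \<rho> i) - \<sigma> j \<le> (\<Sum>k\<in>UNIV. h i j k * (t * i k - j k))"
    using mult_left_mono[OF src[OF i j] t] tgt[OF i j]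
    by (simp add: algebra_simps sum_distrib_left sum_subtractf)
  also have "\<dots> \<le> L * norm1 (\<lambda>k. t * i k - j k)" by (rule sum_mult_le_norm1) (rule h[OF i j])
  finally show "t * (- \<rho> i / L) - \<sigma> j / L \<le> norm1 (\<lambda>k. t * i k - j k)"
    using L by (simp add: field_simps)
qed

text \<open>The value of a dual certificate of the transport system is nonnegative, because the
  extension of its potentials lies in D1.\<close>
lemma weak_duality_certificate:
  fixes I J :: "('k::finite \<Rightarrow> real) set"
  assumes I_ne: "I \<noteq> {}" and J_ne: "J \<noteq> {}" and I_sub: "I \<subseteq> DeltaK" and J_sub: "J \<subseteq> DeltaK"
    and u0: "\<And>i. 0 \<le> u i" and v0: "\<And>j. 0 \<le> v j"
    and D: "\<And>f. f \<in> D1 \<Longrightarrow> (\<Sum>i\<in>I. u i * f i) - (\<Sum>j\<in>J. v j * f j) \<le> D"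
    and L0: "0 \<le> L" and h: "\<And>i j k. i \<in> I \<Longrightarrow> j \<in> J \<Longrightarrow> \<bar>h i j k\<bar> \<le> L"
    and src: "\<And>i j. i \<in> I \<Longrightarrow> j \<in> J \<Longrightarrow> 0 \<le> \<rho> i + (\<Sum>k\<in>UNIV. h i j k * i k)"
    and tgt: "\<And>i j. i \<in> I \<Longrightarrow> j \<in> J \<Longrightarrow> 0 \<le> \<sigma> j - (\<Sum>k\<in>UNIV. h i j k * j k)"
  shows "0 \<le> (\<Sum>i\<in>I. \<rho> i * u i) + (\<Sum>j\<in>J. \<sigma> j * v j) + L * D"
proof (cases "L = 0")
  case True
  obtain i0 j0 where i0: "i0 \<in> I" and j0: "j0 \<in> J" using I_ne J_ne by blast
  have "0 \<le> \<rho> i" if "i \<in> I" for i using src[OF that j0] h[OF that j0] True by simp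
  moreover have "0 \<le> \<sigma> j" if "j \<in> J" for j using tgt[OF i0 that] h[OF i0 that] True by simp
  ultimately show ?thesis using u0 v0 True by (simp add: sum_nonneg)
next
  case False
  then have L: "L > 0" using L0 by simp
  define F where "F i = - \<rho> i / L" for i
  define G where "G j = \<sigma> j / L" for j
  have F_le_1: "F i \<le> 1" if "i \<in> I" for i
    using certificate_potentials(1)[of J I L h \<rho> \<sigma>, OF J_ne I_sub L h src tgt that] by (simp add: F_def)
  have FG: "t * F i - G j \<le> norm1 (\<lambda>k. t * i k - j k)" if "i \<in> I" "j \<in> J" "0 \<le> t" for i j t
    using certificate_potentials(2)[of J I L h \<rho> \<sigma>, OF J_ne I_sub L h src tgt that] by (simp add: F_def G_def)
  define f where "f = cone_ext I F"
  have f: "f \<in> D1" unfolding f_def using I_sub I_ne F_le_1 by (rule cone_ext_in_D1)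
  have "(\<Sum>i\<in>I. u i * F i) \<le> (\<Sum>i\<in>I. u i * f i)"
    using cone_ext_extends[OF I_sub I_ne F_le_1] u0 by (intro sum_mono mult_left_mono) (auto simp: f_def)
  moreover have "(\<Sum>j\<in>J. v j * f j) \<le> (\<Sum>j\<in>J. v j * G j)"
    using cone_ext_below[OF I_sub I_ne F_le_1] FG J_sub v0
    by (intro sum_mono mult_left_mono) (auto simp: f_def)
  ultimately have "(\<Sum>i\<in>I. u i * F i) - (\<Sum>j\<in>J. v j * G j) \<le> D" using D[OF f] by linarith
  from mult_left_mono[OF this L0] show ?thesis
    using L by (simp add: F_def G_def right_diff_distrib sum_distrib_left sum_negf algebra_simps)
qed

section \<open>The transport system\<close>

text \<open>Unknowns: Src i j = gamma_ij, Tgt i j = delta_ij, and Gap i j k bounds |gamma_ij i(k) -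
  delta_ij j(k)|.\<close>
datatype ('a, 'k) plan_var = Src 'a 'a | Tgt 'a 'a | Gap 'a 'a 'k

text \<open>Constraints: nonnegativity, row and column sums (as pairs of inequalities), the two halves
  of each gap bound, and the total budget.\<close>
datatype ('a, 'k) plan_con = SrcNonneg 'a 'a | TgtNonneg 'a 'a | RowUpper 'a | RowLower 'a | ColUpper 'a | ColLower 'a
  | GapUpper 'a 'a 'k | GapLower 'a 'a 'k | Budget

fun plan_coeff :: "('k \<Rightarrow> real, 'k) plan_con \<Rightarrow> ('k \<Rightarrow> real, 'k) plan_var \<Rightarrow> real" where
  "plan_coeff (SrcNonneg i j) w = (if w = Src i j then -1 else 0)"
| "plan_coeff (TgtNonneg i j) w = (if w = Tgt i j then -1 else 0)"
| "plan_coeff (RowUpper i) w = (case w of Src i' j' \<Rightarrow> if i' = i then 1 else 0 | _ \<Rightarrow> 0)"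
| "plan_coeff (RowLower i) w = (case w of Src i' j' \<Rightarrow> if i' = i then -1 else 0 | _ \<Rightarrow> 0)"
| "plan_coeff (ColUpper j) w = (case w of Tgt i' j' \<Rightarrow> if j' = j then 1 else 0 | _ \<Rightarrow> 0)"
| "plan_coeff (ColLower j) w = (case w of Tgt i' j' \<Rightarrow> if j' = j then -1 else 0 | _ \<Rightarrow> 0)"
| "plan_coeff (GapUpper i j k) w =
     (if w = Src i j then i k else if w = Tgt i j then - j k else if w = Gap i j k then -1 else 0)"
| "plan_coeff (GapLower i j k) w =
     (if w = Src i j then - i k else if w = Tgt i j then j k else if w = Gap i j k then -1 else 0)"
| "plan_coeff Budget w = (case w of Gap _ _ _ \<Rightarrow> 1 | _ \<Rightarrow> 0)"

fun plan_rhs :: "(('k \<Rightarrow> real) \<Rightarrow> real) \<Rightarrow> (('k \<Rightarrow> real) \<Rightarrow> real) \<Rightarrow> real \<Rightarrow> ('k \<Rightarrow> real, 'k) plan_con \<Rightarrow> real" where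
  "plan_rhs u v D (RowUpper i) = u i"
| "plan_rhs u v D (RowLower i) = - u i"
| "plan_rhs u v D (ColUpper j) = v j"
| "plan_rhs u v D (ColLower j) = - v j"
| "plan_rhs u v D Budget = D"
| "plan_rhs u v D _ = 0"

definition plan_vars :: "('a set) \<Rightarrow> 'a set \<Rightarrow> ('a, 'k) plan_var set" where
  "plan_vars I J = case_prod Src ` (I \<times> J) \<union> case_prod Tgt ` (I \<times> J) \<union> (\<lambda>(i, j, k). Gap i j k) ` (I \<times> J \<times> UNIV)"

definition plan_cons :: "('a set) \<Rightarrow> 'a set \<Rightarrow> ('a, 'k) plan_con set" where
  "plan_cons I J = case_prod SrcNonneg ` (I \<times> J) \<union> case_prod TgtNonneg ` (I \<times> J)
     \<union> RowUpper ` I \<union> RowLower ` I \<union> ColUpper ` J \<union> ColLower ` J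
     \<union> (\<lambda>(i, j, k). GapUpper i j k) ` (I \<times> J \<times> UNIV) \<union> (\<lambda>(i, j, k). GapLower i j k) ` (I \<times> J \<times> UNIV) \<union> {Budget}"

abbreviation plan_lhs :: "('k::finite \<Rightarrow> real) set \<Rightarrow> ('k \<Rightarrow> real) set \<Rightarrow> ('k \<Rightarrow> real, 'k) plan_con
    \<Rightarrow> (('k \<Rightarrow> real, 'k) plan_var \<Rightarrow> real) \<Rightarrow> real" where
  "plan_lhs I J c x \<equiv> (\<Sum>w\<in>plan_vars I J. plan_coeff c w * x w)"

abbreviation plan_dual :: "('k::finite \<Rightarrow> real) set \<Rightarrow> ('k \<Rightarrow> real) set \<Rightarrow> (('k \<Rightarrow> real, 'k) plan_con \<Rightarrow> real)
    \<Rightarrow> ('k \<Rightarrow> real, 'k) plan_var \<Rightarrow> real" where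
  "plan_dual I J l w \<equiv> (\<Sum>c\<in>plan_cons I J. l c * plan_coeff c w)"

lemma finite_plan_vars: "finite I \<Longrightarrow> finite J \<Longrightarrow> finite (plan_vars I J :: ('a, 'k::finite) plan_var set)"
  by (simp add: plan_vars_def)

lemma finite_plan_cons: "finite I \<Longrightarrow> finite J \<Longrightarrow> finite (plan_cons I J :: ('a, 'k::finite) plan_con set)"
  by (simp add: plan_cons_def)

lemma sum_eq_on_subset:
  "finite A \<Longrightarrow> B \<subseteq> A \<Longrightarrow> (\<And>x. x \<in> A \<Longrightarrow> x \<notin> B \<Longrightarrow> g x = 0) \<Longrightarrow> sum g A = sum g B"
  by (rule sum.mono_neutral_right) auto

lemma Gap_img [simp]: "Gap i j k \<in> (\<lambda>(i, j, k). Gap i j k) ` (I \<times> J \<times> UNIV) \<longleftrightarrow> i \<in> I \<and> j \<in> J"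
  by (auto simp: image_iff)

lemma GapUpper_img [simp]: "GapUpper i j k \<in> (\<lambda>(i, j, k). GapUpper i j k) ` (I \<times> J \<times> UNIV) \<longleftrightarrow> i \<in> I \<and> j \<in> J"
  by (auto simp: image_iff)

lemma GapLower_img [simp]: "GapLower i j k \<in> (\<lambda>(i, j, k). GapLower i j k) ` (I \<times> J \<times> UNIV) \<longleftrightarrow> i \<in> I \<and> j \<in> J"
  by (auto simp: image_iff)

context
  fixes I J :: "('k::finite \<Rightarrow> real) set"
  assumes finI: "finite I" and finJ: "finite J"
begin

lemma plan_lhs_SrcNonneg:
  assumes "i \<in> I" "j \<in> J"
  shows "plan_lhs I J (SrcNonneg i j) x = - x (Src i j)"
proof -
  have "plan_lhs I J (SrcNonneg i j) x = (\<Sum>w\<in>{Src i j}. plan_coeff (SrcNonneg i j) w * x w)"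
    by (rule sum_eq_on_subset)
      (use assms finI finJ in \<open>auto simp: plan_vars_def finite_plan_vars split: if_splits\<close>)
  then show ?thesis by simp
qed

lemma plan_lhs_TgtNonneg:
  assumes "i \<in> I" "j \<in> J"
  shows "plan_lhs I J (TgtNonneg i j) x = - x (Tgt i j)"
proof -
  have "plan_lhs I J (TgtNonneg i j) x = (\<Sum>w\<in>{Tgt i j}. plan_coeff (TgtNonneg i j) w * x w)"
    by (rule sum_eq_on_subset)
      (use assms finI finJ in \<open>auto simp: plan_vars_def finite_plan_vars split: if_splits\<close>)
  then show ?thesis by simp
qed

lemma plan_lhs_Row:
  assumes "i \<in> I"
  shows "plan_lhs I J (RowUpper i) x = (\<Sum>j\<in>J. x (Src i j))"
    and "plan_lhs I J (RowLower i) x = - (\<Sum>j\<in>J. x (Src i j))"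
proof -
  have "plan_lhs I J (RowUpper i) x = (\<Sum>w\<in>Src i ` J. plan_coeff (RowUpper i) w * x w)"
    by (rule sum_eq_on_subset)
      (use assms finI finJ in \<open>auto simp: plan_vars_def finite_plan_vars split: if_splits\<close>)
  also have "\<dots> = (\<Sum>j\<in>J. x (Src i j))" by (subst sum.reindex) (auto simp: inj_on_def)
  finally show "plan_lhs I J (RowUpper i) x = (\<Sum>j\<in>J. x (Src i j))" .
  have "plan_lhs I J (RowLower i) x = (\<Sum>w\<in>Src i ` J. plan_coeff (RowLower i) w * x w)"
    by (rule sum_eq_on_subset)
      (use assms finI finJ in \<open>auto simp: plan_vars_def finite_plan_vars split: if_splits\<close>)
  also have "\<dots> = - (\<Sum>j\<in>J. x (Src i j))" by (subst sum.reindex) (auto simp: inj_on_def sum_negf)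
  finally show "plan_lhs I J (RowLower i) x = - (\<Sum>j\<in>J. x (Src i j))" .
qed

lemma plan_lhs_Col:
  assumes "j \<in> J"
  shows "plan_lhs I J (ColUpper j) x = (\<Sum>i\<in>I. x (Tgt i j))"
    and "plan_lhs I J (ColLower j) x = - (\<Sum>i\<in>I. x (Tgt i j))"
proof -
  have "plan_lhs I J (ColUpper j) x = (\<Sum>w\<in>(\<lambda>i. Tgt i j) ` I. plan_coeff (ColUpper j) w * x w)"
    by (rule sum_eq_on_subset)
      (use assms finI finJ in \<open>auto simp: plan_vars_def finite_plan_vars split: if_splits\<close>)
  also have "\<dots> = (\<Sum>i\<in>I. x (Tgt i j))" by (subst sum.reindex) (auto simp: inj_on_def)
  finally show "plan_lhs I J (ColUpper j) x = (\<Sum>i\<in>I. x (Tgt i j))" .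
  have "plan_lhs I J (ColLower j) x = (\<Sum>w\<in>(\<lambda>i. Tgt i j) ` I. plan_coeff (ColLower j) w * x w)"
    by (rule sum_eq_on_subset)
      (use assms finI finJ in \<open>auto simp: plan_vars_def finite_plan_vars split: if_splits\<close>)
  also have "\<dots> = - (\<Sum>i\<in>I. x (Tgt i j))" by (subst sum.reindex) (auto simp: inj_on_def sum_negf)
  finally show "plan_lhs I J (ColLower j) x = - (\<Sum>i\<in>I. x (Tgt i j))" .
qed

lemma plan_lhs_Gap:
  assumes "i \<in> I" "j \<in> J"
  shows "plan_lhs I J (GapUpper i j k) x = i k * x (Src i j) - j k * x (Tgt i j) - x (Gap i j k)"
    and "plan_lhs I J (GapLower i j k) x = - i k * x (Src i j) + j k * x (Tgt i j) - x (Gap i j k)"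
proof -
  have "plan_lhs I J (GapUpper i j k) x = (\<Sum>w\<in>{Src i j, Tgt i j, Gap i j k}. plan_coeff (GapUpper i j k) w * x w)"
    by (rule sum_eq_on_subset)
      (use assms finI finJ in \<open>auto simp: plan_vars_def finite_plan_vars split: if_splits\<close>)
  then show "plan_lhs I J (GapUpper i j k) x = i k * x (Src i j) - j k * x (Tgt i j) - x (Gap i j k)" by simp
  have "plan_lhs I J (GapLower i j k) x = (\<Sum>w\<in>{Src i j, Tgt i j, Gap i j k}. plan_coeff (GapLower i j k) w * x w)"
    by (rule sum_eq_on_subset)
      (use assms finI finJ in \<open>auto simp: plan_vars_def finite_plan_vars split: if_splits\<close>)
  then show "plan_lhs I J (GapLower i j k) x = - i k * x (Src i j) + j k * x (Tgt i j) - x (Gap i j k)" by simp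
qed

lemma plan_lhs_Budget:
  shows "plan_lhs I J Budget x = (\<Sum>(i, j, k)\<in>I \<times> J \<times> UNIV. x (Gap i j k))"
proof -
  have "plan_lhs I J Budget x = (\<Sum>w\<in>(\<lambda>(i, j, k). Gap i j k) ` (I \<times> J \<times> UNIV). plan_coeff Budget w * x w)"
    by (rule sum_eq_on_subset)
      (use finI finJ in \<open>auto simp: plan_vars_def finite_plan_vars split: if_splits\<close>)
  also have "\<dots> = (\<Sum>(i, j, k)\<in>I \<times> J \<times> UNIV. x (Gap i j k))"
    by (subst sum.reindex) (auto simp: inj_on_def intro!: sum.cong)
  finally show ?thesis .
qed

lemma plan_dual_Gap:
  assumes "i \<in> I" "j \<in> J"
  shows "plan_dual I J l (Gap i j k) = l Budget - l (GapUpper i j k) - l (GapLower i j k)"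
proof -
  have "plan_dual I J l (Gap i j k) = (\<Sum>c\<in>{Budget, GapUpper i j k, GapLower i j k}. l c * plan_coeff c (Gap i j k))"
    by (rule sum_eq_on_subset)
      (use assms finI finJ in \<open>auto simp: plan_cons_def finite_plan_cons split: if_splits\<close>)
  then show ?thesis by simp
qed

lemma plan_dual_Src:
  assumes "i \<in> I" "j \<in> J"
  shows "plan_dual I J l (Src i j) = - l (SrcNonneg i j) + l (RowUpper i) - l (RowLower i)
           + (\<Sum>k\<in>UNIV. (l (GapUpper i j k) - l (GapLower i j k)) * i k)"
proof -
  have "plan_dual I J l (Src i j) 
      = (\<Sum>c\<in>{SrcNonneg i j, RowUpper i, RowLower i} \<union> (range (GapUpper i j) \<union> range (GapLower i j)). l c * plan_coeff c (Src i j))"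
    by (rule sum_eq_on_subset)
      (use assms finI finJ in \<open>auto simp: plan_cons_def finite_plan_cons split: if_splits\<close>)
  also have "\<dots> = (\<Sum>c\<in>{SrcNonneg i j, RowUpper i, RowLower i}. l c * plan_coeff c (Src i j))
      + ((\<Sum>c\<in>range (GapUpper i j). l c * plan_coeff c (Src i j)) + (\<Sum>c\<in>range (GapLower i j). l c * plan_coeff c (Src i j)))"
    by (subst sum.union_disjoint, auto)+
  also have "\<dots> = - l (SrcNonneg i j) + l (RowUpper i) - l (RowLower i)
           + (\<Sum>k\<in>UNIV. (l (GapUpper i j k) - l (GapLower i j k)) * i k)"
    by (simp add: sum.reindex inj_on_def left_diff_distrib sum_subtractf sum_negf)
  finally show ?thesis .
qed

lemma plan_dual_Tgt:
  assumes "i \<in> I" "j \<in> J"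
  shows "plan_dual I J l (Tgt i j) = - l (TgtNonneg i j) + l (ColUpper j) - l (ColLower j)
           - (\<Sum>k\<in>UNIV. (l (GapUpper i j k) - l (GapLower i j k)) * j k)"
proof -
  have "plan_dual I J l (Tgt i j) 
      = (\<Sum>c\<in>{TgtNonneg i j, ColUpper j, ColLower j} \<union> (range (GapUpper i j) \<union> range (GapLower i j)). l c * plan_coeff c (Tgt i j))"
    by (rule sum_eq_on_subset)
      (use assms finI finJ in \<open>auto simp: plan_cons_def finite_plan_cons split: if_splits\<close>)
  also have "\<dots> = (\<Sum>c\<in>{TgtNonneg i j, ColUpper j, ColLower j}. l c * plan_coeff c (Tgt i j))
      + ((\<Sum>c\<in>range (GapUpper i j). l c * plan_coeff c (Tgt i j)) + (\<Sum>c\<in>range (GapLower i j). l c * plan_coeff c (Tgt i j)))"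
    by (subst sum.union_disjoint, auto)+
  also have "\<dots> = - l (TgtNonneg i j) + l (ColUpper j) - l (ColLower j)
           - (\<Sum>k\<in>UNIV. (l (GapUpper i j k) - l (GapLower i j k)) * j k)"
    by (simp add: sum.reindex inj_on_def left_diff_distrib sum_subtractf sum_negf)
  finally show ?thesis .
qed

lemma plan_dual_objective:
  "(\<Sum>c\<in>plan_cons I J. l c * plan_rhs u v D c)
     = (\<Sum>i\<in>I. (l (RowUpper i) - l (RowLower i)) * u i) + (\<Sum>j\<in>J. (l (ColUpper j) - l (ColLower j)) * v j) + l Budget * D"
proof -
  have "(\<Sum>c\<in>plan_cons I J. l c * plan_rhs u v D c)
      = (\<Sum>c\<in>insert Budget ((RowUpper ` I \<union> RowLower ` I) \<union> (ColUpper ` J \<union> ColLower ` J)). l c * plan_rhs u v D c)"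
    by (rule sum_eq_on_subset)
      (use finI finJ in \<open>auto simp: plan_cons_def finite_plan_cons split: if_splits\<close>)
  also have "\<dots> = l Budget * D
      + (\<Sum>c\<in>(RowUpper ` I \<union> RowLower ` I) \<union> (ColUpper ` J \<union> ColLower ` J). l c * plan_rhs u v D c)"
    using finI finJ by (subst sum.insert) auto
  also have "\<dots> = l Budget * D
      + (((\<Sum>c\<in>RowUpper ` I. l c * plan_rhs u v D c) + (\<Sum>c\<in>RowLower ` I. l c * plan_rhs u v D c))
      + ((\<Sum>c\<in>ColUpper ` J. l c * plan_rhs u v D c) + (\<Sum>c\<in>ColLower ` J. l c * plan_rhs u v D c)))"
    using finI finJ by (subst sum.union_disjoint, auto)+
  also have "\<dots> = (\<Sum>i\<in>I. (l (RowUpper i) - l (RowLower i)) * u i)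
      + (\<Sum>j\<in>J. (l (ColUpper j) - l (ColLower j)) * v j) + l Budget * D"
    by (simp add: sum.reindex inj_on_def left_diff_distrib sum_subtractf sum_negf)
  finally show ?thesis .
qed

end

lemma plan_cons_mem:
  "i \<in> I \<Longrightarrow> j \<in> J \<Longrightarrow> SrcNonneg i j \<in> plan_cons I J"
  "i \<in> I \<Longrightarrow> j \<in> J \<Longrightarrow> TgtNonneg i j \<in> plan_cons I J"
  "i \<in> I \<Longrightarrow> RowUpper i \<in> plan_cons I J" "i \<in> I \<Longrightarrow> RowLower i \<in> plan_cons I J"
  "j \<in> J \<Longrightarrow> ColUpper j \<in> plan_cons I J" "j \<in> J \<Longrightarrow> ColLower j \<in> plan_cons I J"
  "i \<in> I \<Longrightarrow> j \<in> J \<Longrightarrow> GapUpper i j k \<in> plan_cons I J"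
  "i \<in> I \<Longrightarrow> j \<in> J \<Longrightarrow> GapLower i j k \<in> plan_cons I J"
  "Budget \<in> plan_cons I J"
  by (force simp: plan_cons_def)+

lemma plan_vars_mem:
  "i \<in> I \<Longrightarrow> j \<in> J \<Longrightarrow> Src i j \<in> plan_vars I J"
  "i \<in> I \<Longrightarrow> j \<in> J \<Longrightarrow> Tgt i j \<in> plan_vars I J"
  "i \<in> I \<Longrightarrow> j \<in> J \<Longrightarrow> Gap i j k \<in> plan_vars I J"
  by (force simp: plan_vars_def)+

text \<open>The transport system with budget d_*(u, v) is feasible: Farkas' lemma, with the dual
  condition supplied by weak duality.\<close>
lemma transport_lp_feasible:
  fixes u v :: "('k::finite \<Rightarrow> real) \<Rightarrow> real"
  assumes u: "u \<in> DeltaF" and v: "v \<in> DeltaF"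
  defines "I \<equiv> {x. u x \<noteq> 0}" and "J \<equiv> {x. v x \<noteq> 0}"
  shows "\<exists>x. \<forall>c\<in>plan_cons I J. plan_lhs I J c x \<le> plan_rhs u v (dstar u v) c"
proof (rule farkas)
  have finI: "finite I" and I_sub: "I \<subseteq> DeltaK" and u0: "\<And>x. 0 \<le> u x" and u1: "sum u I = 1"
    using u by (auto simp: DeltaF_def I_def)
  have finJ: "finite J" and J_sub: "J \<subseteq> DeltaK" and v0: "\<And>x. 0 \<le> v x" and v1: "sum v J = 1"
    using v by (auto simp: DeltaF_def J_def)
  have I_ne: "I \<noteq> {}" and J_ne: "J \<noteq> {}" using u1 v1 by auto
  show "finite (plan_vars I J :: ('k \<Rightarrow> real, 'k) plan_var set)" using finI finJ by (rule finite_plan_vars)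
  show "finite (plan_cons I J :: ('k \<Rightarrow> real, 'k) plan_con set)" using finI finJ by (rule finite_plan_cons)
  fix l :: "('k \<Rightarrow> real, 'k) plan_con \<Rightarrow> real"
  assume "\<forall>c\<in>plan_cons I J. 0 \<le> l c" "\<forall>w\<in>plan_vars I J. plan_dual I J l w = 0"
  then have l0: "\<And>c. c \<in> plan_cons I J \<Longrightarrow> 0 \<le> l c"
    and col: "\<And>w. w \<in> plan_vars I J \<Longrightarrow> plan_dual I J l w = 0" by auto
  define h where "h i j k = l (GapUpper i j k) - l (GapLower i j k)" for i j k
  have budget: "l (GapUpper i j k) + l (GapLower i j k) = l Budget" if "i \<in> I" "j \<in> J" for i j k
    using col[OF plan_vars_mem(3)[OF that, where k=k]] plan_dual_Gap[OF finI finJ that, of l k] by simp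
  show "0 \<le> (\<Sum>c\<in>plan_cons I J. l c * plan_rhs u v (dstar u v) c)"
    unfolding plan_dual_objective[OF finI finJ]
  proof (rule weak_duality_certificate[OF I_ne J_ne I_sub J_sub u0 v0])
    show "(\<Sum>i\<in>I. u i * f i) - (\<Sum>j\<in>J. v j * f j) \<le> dstar u v" if "f \<in> D1" for f
      using dstar_upper[OF u v that] by (simp add: integ_def I_def J_def)
    show "0 \<le> l Budget" by (rule l0[OF plan_cons_mem(9)])
    show "\<bar>h i j k\<bar> \<le> l Budget" if "i \<in> I" "j \<in> J" for i j k
      using budget[OF that, of k] l0[OF plan_cons_mem(7)[OF that, where k=k]] l0[OF plan_cons_mem(8)[OF that, where k=k]]
      by (simp add: h_def abs_le_iff)
    show "0 \<le> l (RowUpper i) - l (RowLower i) + (\<Sum>k\<in>UNIV. h i j k * i k)" if "i \<in> I" "j \<in> J" for i j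
      using col[OF plan_vars_mem(1)[OF that]] plan_dual_Src[OF finI finJ that, of l]
        l0[OF plan_cons_mem(1)[OF that]] unfolding h_def by linarith
    show "0 \<le> l (ColUpper j) - l (ColLower j) - (\<Sum>k\<in>UNIV. h i j k * j k)" if "i \<in> I" "j \<in> J" for i j
      using col[OF plan_vars_mem(2)[OF that]] plan_dual_Tgt[OF finI finJ that, of l]
        l0[OF plan_cons_mem(2)[OF that]] unfolding h_def by linarith
  qed
qed

lemma optimal_plan_exists:
  fixes u v :: "('k::finite \<Rightarrow> real) \<Rightarrow> real"
  assumes u: "u \<in> DeltaF" and v: "v \<in> DeltaF"
  defines "I \<equiv> {x. u x \<noteq> 0}" and "J \<equiv> {x. v x \<noteq> 0}"
  obtains \<gamma> \<delta> where "\<And>i j. i \<in> I \<Longrightarrow> j \<in> J \<Longrightarrow> 0 \<le> \<gamma> i j \<and> 0 \<le> \<delta> i j"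
    "\<And>i. i \<in> I \<Longrightarrow> (\<Sum>j\<in>J. \<gamma> i j) = u i" "\<And>j. j \<in> J \<Longrightarrow> (\<Sum>i\<in>I. \<delta> i j) = v j"
    "(\<Sum>i\<in>I. \<Sum>j\<in>J. norm1 (\<lambda>k. \<gamma> i j * i k - \<delta> i j * j k)) \<le> dstar u v"
proof -
  have finI: "finite I" and finJ: "finite J" using u v by (auto simp: DeltaF_def I_def J_def)
  obtain x where x: "\<And>c. c \<in> plan_cons I J \<Longrightarrow>
      plan_lhs I J c x \<le> plan_rhs u v (dstar u v) c"
    using transport_lp_feasible[OF u v] unfolding I_def J_def by blast
  define \<gamma> where "\<gamma> i j = x (Src i j)" for i j
  define \<delta> where "\<delta> i j = x (Tgt i j)" for i j
  define \<tau> where "\<tau> i j k = x (Gap i j k)" for i j k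
  note lhs = plan_lhs_SrcNonneg[OF finI finJ] plan_lhs_TgtNonneg[OF finI finJ]
    plan_lhs_Row[OF finI finJ] plan_lhs_Col[OF finI finJ] plan_lhs_Gap[OF finI finJ]
  have nonneg: "0 \<le> \<gamma> i j \<and> 0 \<le> \<delta> i j" if "i \<in> I" "j \<in> J" for i j
    using x[OF plan_cons_mem(1)[OF that]] x[OF plan_cons_mem(2)[OF that]] lhs(1,2)[OF that, of x]
    by (simp add: \<gamma>_def \<delta>_def)
  have rows: "(\<Sum>j\<in>J. \<gamma> i j) = u i" if "i \<in> I" for i
    using x[OF plan_cons_mem(3)[OF that]] x[OF plan_cons_mem(4)[OF that]] lhs(3,4)[OF that, of x]
    by (simp add: \<gamma>_def)
  have cols: "(\<Sum>i\<in>I. \<delta> i j) = v j" if "j \<in> J" for j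
    using x[OF plan_cons_mem(5)[OF that]] x[OF plan_cons_mem(6)[OF that]] lhs(5,6)[OF that, of x]
    by (simp add: \<delta>_def)
  have gap: "\<bar>\<gamma> i j * i k - \<delta> i j * j k\<bar> \<le> \<tau> i j k" if "i \<in> I" "j \<in> J" for i j k
    using x[OF plan_cons_mem(7)[OF that, where k=k]] x[OF plan_cons_mem(8)[OF that, where k=k]] lhs(7,8)[OF that, of k x]
    by (simp add: \<gamma>_def \<delta>_def \<tau>_def algebra_simps abs_le_iff)
  have "(\<Sum>i\<in>I. \<Sum>j\<in>J. norm1 (\<lambda>k. \<gamma> i j * i k - \<delta> i j * j k)) \<le> (\<Sum>i\<in>I. \<Sum>j\<in>J. \<Sum>k\<in>UNIV. \<tau> i j k)"
    unfolding norm1_def using gap by (intro sum_mono) auto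
  also have "\<dots> = (\<Sum>(i, j, k)\<in>I \<times> J \<times> UNIV. \<tau> i j k)"
    by (simp add: sum.cartesian_product)
  also have "\<dots> \<le> dstar u v"
    using x[OF plan_cons_mem(9)] plan_lhs_Budget[OF finI finJ, of x] by (simp add: \<tau>_def)
  finally have cost: "(\<Sum>i\<in>I. \<Sum>j\<in>J. norm1 (\<lambda>k. \<gamma> i j * i k - \<delta> i j * j k)) \<le> dstar u v" .
  show ?thesis using nonneg rows cols cost by (rule that)
qed

section \<open>Joint distributions from transport plans\<close>

text \<open>The joint distribution on K x nat that puts the weighted posterior w q * p q on the signal e
  q.\<close>
definition stack_measure :: "'q set \<Rightarrow> ('q \<Rightarrow> nat) \<Rightarrow> ('q \<Rightarrow> real) \<Rightarrow> ('q \<Rightarrow> 'k \<Rightarrow> real) \<Rightarrow> ('k \<times> nat \<Rightarrow> real)" where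
  "stack_measure Q e w p = (\<lambda>(k, s). if s \<in> e ` Q then w (the_inv_into Q e s) * p (the_inv_into Q e s) k else 0)"

lemma stack_measure_at: "inj_on e Q \<Longrightarrow> q \<in> Q \<Longrightarrow> stack_measure Q e w p (k, e q) = w q * p q k"
  by (simp add: stack_measure_def the_inv_into_f_f)

lemma stack_measure_out: "s \<notin> e ` Q \<Longrightarrow> stack_measure Q e w p (k, s) = 0"
  by (simp add: stack_measure_def)

lemma stack_measure_marg: "inj_on e Q \<Longrightarrow> q \<in> Q \<Longrightarrow> p q \<in> DeltaK \<Longrightarrow> marg (stack_measure Q e w p) (e q) = w q"
  by (simp add: marg_def stack_measure_at DeltaK_def flip: sum_distrib_left)

lemma stack_measure_psi:
  fixes p :: "'q \<Rightarrow> ('k::finite \<Rightarrow> real)"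
  assumes Q: "finite Q" and e: "inj_on e Q" and pD: "\<And>q. q \<in> Q \<Longrightarrow> p q \<in> DeltaK"
  shows "psi (e ` Q) (stack_measure Q e w p) x = (\<Sum>q\<in>{q\<in>Q. p q = x}. w q)"
proof -
  let ?m = "stack_measure Q e w p"
  have mq: "marg ?m (e q) = w q" if "q \<in> Q" for q
    using e that pD[OF that] by (rule stack_measure_marg[where e=e and Q=Q and p=p and w=w])
  have "psi (e ` Q) ?m x = (\<Sum>s\<in>e ` {q\<in>Q. post ?m (e q) = x}. marg ?m s)"
    unfolding psi_def by (rule sum.cong) auto
  also have "\<dots> = (\<Sum>q\<in>{q\<in>Q. post ?m (e q) = x}. marg ?m (e q))"
    by (rule sum.reindex_cong[where l=e]) (auto intro: inj_on_subset[OF e])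
  also have "\<dots> = (\<Sum>q\<in>Q. if post ?m (e q) = x then w q else 0)"
    using Q by (simp add: sum.inter_filter mq)
  also have "\<dots> = (\<Sum>q\<in>Q. if p q = x then w q else 0)"
  proof (rule sum.cong[OF refl])
    fix q assume q: "q \<in> Q"
    have m: "marg ?m (e q) = w q" using mq[OF q] .
    show "(if post ?m (e q) = x then w q else 0) = (if p q = x then w q else 0)"
    proof (cases "w q = 0")
      case True then show ?thesis by simp
    next
      case False
      then have "post ?m (e q) = p q" using m by (simp add: post_def stack_measure_at[OF e q] fun_eq_iff)
      then show ?thesis by simp
    qed
  qed
  also have "\<dots> = (\<Sum>q\<in>{q\<in>Q. p q = x}. w q)" using Q by (simp add: sum.inter_filter)
  finally show ?thesis .
qed

lemma stack_measure_sum: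
  fixes p p' :: "'q \<Rightarrow> ('k::finite \<Rightarrow> real)"
  assumes Q: "finite Q" and e: "inj_on e Q"
  shows "(\<Sum>ks\<in>UNIV \<times> e ` Q. g (stack_measure Q e w p ks) (stack_measure Q e w' p' ks))
       = (\<Sum>q\<in>Q. \<Sum>k\<in>UNIV. g (w q * p q k) (w' q * p' q k))"
proof -
  have "(\<Sum>ks\<in>UNIV \<times> e ` Q. g (stack_measure Q e w p ks) (stack_measure Q e w' p' ks))
      = (\<Sum>k\<in>UNIV. \<Sum>s\<in>e ` Q. g (stack_measure Q e w p (k, s)) (stack_measure Q e w' p' (k, s)))"
    by (simp add: sum.cartesian_product)
  also have "\<dots> = (\<Sum>s\<in>e ` Q. \<Sum>k\<in>UNIV. g (stack_measure Q e w p (k, s)) (stack_measure Q e w' p' (k, s)))"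
    by (rule sum.swap)
  also have "\<dots> = (\<Sum>q\<in>Q. \<Sum>k\<in>UNIV. g (w q * p q k) (w' q * p' q k))"
    using e by (simp add: sum.reindex stack_measure_at)
  finally show ?thesis .
qed

lemma stack_measure_DeltaKS:
  fixes p :: "'q \<Rightarrow> ('k::finite \<Rightarrow> real)"
  assumes Q: "finite Q" and e: "inj_on e Q" and pD: "\<And>q. q \<in> Q \<Longrightarrow> p q \<in> DeltaK"
    and w0: "\<And>q. q \<in> Q \<Longrightarrow> 0 \<le> w q" and w1: "(\<Sum>q\<in>Q. w q) = 1"
  shows "stack_measure Q e w p \<in> DeltaKS (e ` Q)"
proof -
  have "0 \<le> stack_measure Q e w p (k, s)" for k s
    using w0 pD by (cases "s \<in> e ` Q") (auto simp: stack_measure_at[OF e] stack_measure_out DeltaK_def)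
  moreover have "(\<Sum>ks\<in>UNIV \<times> e ` Q. stack_measure Q e w p ks) = 1"
    using stack_measure_sum[OF Q e, where g="\<lambda>a b. a" and w=w and p=p and w'=w and p'=p] pD w1
    by (simp add: DeltaK_def flip: sum_distrib_left)
  ultimately show ?thesis by (auto simp: DeltaKS_def stack_measure_out)
qed

lemma l1dist_stack_measure:
  fixes p p' :: "'q \<Rightarrow> ('k::finite \<Rightarrow> real)"
  assumes "finite Q" "inj_on e Q"
  shows "l1dist (e ` Q) (stack_measure Q e w p) (stack_measure Q e w' p')
       = (\<Sum>q\<in>Q. norm1 (\<lambda>k. w q * p q k - w' q * p' q k))"
  unfolding l1dist_def norm1_def by (rule stack_measure_sum[OF assms, where g="\<lambda>a b. \<bar>a - b\<bar>"])

lemma stack_measure_posteriors: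
  fixes p :: "'q \<Rightarrow> ('k::finite \<Rightarrow> real)"
  assumes Q: "finite Q" and e: "inj_on e Q" and pD: "\<And>q. q \<in> Q \<Longrightarrow> p q \<in> DeltaK"
    and w0: "\<And>q. q \<in> Q \<Longrightarrow> 0 \<le> w q" and w1: "(\<Sum>q\<in>Q. w q) = 1"
    and fiber: "\<And>z. (\<Sum>q\<in>{q\<in>Q. p q = z}. w q) = u z"
  shows "stack_measure Q e w p \<in> DeltaKS (e ` Q)" "psi (e ` Q) (stack_measure Q e w p) = u"
  using stack_measure_DeltaKS[OF Q e pD w0 w1] stack_measure_psi[OF Q e pD] fiber by auto

lemma sum_fiber_fst:
  "(\<Sum>q\<in>{q\<in>I \<times> J. fst q = z}. g q) = (if z \<in> I then (\<Sum>j\<in>J. g (z, j)) else 0)"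
proof -
  have "{q\<in>I \<times> J. fst q = z} = (if z \<in> I then Pair z ` J else {})" by auto
  then show ?thesis by (simp add: sum.reindex inj_on_def)
qed

lemma sum_fiber_snd:
  "(\<Sum>q\<in>{q\<in>I \<times> J. snd q = z}. g q) = (if z \<in> J then (\<Sum>i\<in>I. g (i, z)) else 0)"
proof -
  have "{q\<in>I \<times> J. snd q = z} = (if z \<in> J then (\<lambda>i. (i, z)) ` I else {})" by auto
  then show ?thesis by (simp add: sum.reindex inj_on_def)
qed

lemma coupling_of_plan:
  fixes u v :: "('k::finite \<Rightarrow> real) \<Rightarrow> real" and I J :: "('k \<Rightarrow> real) set"
  assumes finI: "finite I" and finJ: "finite J" and I_sub: "I \<subseteq> DeltaK" and J_sub: "J \<subseteq> DeltaK"
    and u_out: "\<And>x. x \<notin> I \<Longrightarrow> u x = 0" and v_out: "\<And>x. x \<notin> J \<Longrightarrow> v x = 0"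
    and u1: "(\<Sum>i\<in>I. u i) = 1" and v1: "(\<Sum>j\<in>J. v j) = 1"
    and nonneg: "\<And>i j. i \<in> I \<Longrightarrow> j \<in> J \<Longrightarrow> 0 \<le> \<gamma> i j \<and> 0 \<le> \<delta> i j"
    and rows: "\<And>i. i \<in> I \<Longrightarrow> (\<Sum>j\<in>J. \<gamma> i j) = u i"
    and cols: "\<And>j. j \<in> J \<Longrightarrow> (\<Sum>i\<in>I. \<delta> i j) = v j"
  obtains T :: "nat set" and \<pi> \<pi>' where "finite T" "\<pi> \<in> DeltaKS T" "\<pi>' \<in> DeltaKS T"
    "psi T \<pi> = u" "psi T \<pi>' = v"
    "l1dist T \<pi> \<pi>' = (\<Sum>i\<in>I. \<Sum>j\<in>J. norm1 (\<lambda>k. \<gamma> i j * i k - \<delta> i j * j k))"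
proof -
  define Q where "Q = I \<times> J"
  have finQ: "finite Q" using finI finJ by (simp add: Q_def)
  obtain e :: "('k \<Rightarrow> real) \<times> ('k \<Rightarrow> real) \<Rightarrow> nat" where e: "inj_on e Q"
    using finite_imp_inj_to_nat_seg[OF finQ] by blast
  define w where "w q = \<gamma> (fst q) (snd q)" for q
  define w' where "w' q = \<delta> (fst q) (snd q)" for q
  have fstD: "\<And>q. q \<in> Q \<Longrightarrow> fst q \<in> DeltaK" and sndD: "\<And>q. q \<in> Q \<Longrightarrow> snd q \<in> DeltaK"
    using I_sub J_sub by (auto simp: Q_def)
  have w0: "\<And>q. q \<in> Q \<Longrightarrow> 0 \<le> w q" and w'0: "\<And>q. q \<in> Q \<Longrightarrow> 0 \<le> w' q"
    using nonneg by (auto simp: Q_def w_def w'_def)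
  have fiber: "(\<Sum>q\<in>{q\<in>Q. fst q = z}. w q) = u z" "(\<Sum>q\<in>{q\<in>Q. snd q = z}. w' q) = v z" for z
    using rows u_out cols v_out by (simp_all add: Q_def w_def w'_def sum_fiber_fst sum_fiber_snd)
  have "(\<Sum>q\<in>Q. w q) = (\<Sum>i\<in>I. \<Sum>j\<in>J. \<gamma> i j)" by (simp add: Q_def w_def sum.cartesian_product')
  also have "\<dots> = 1" using rows u1 by simp
  finally have mass: "(\<Sum>q\<in>Q. w q) = 1" .
  have "(\<Sum>q\<in>Q. w' q) = (\<Sum>j\<in>J. \<Sum>i\<in>I. \<delta> i j)"
    by (simp add: Q_def w'_def sum.cartesian_product' sum.swap[of _ I])
  also have "\<dots> = 1" using cols v1 by simp
  finally have mass': "(\<Sum>q\<in>Q. w' q) = 1" .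
  note \<pi> = stack_measure_posteriors[OF finQ e fstD w0 mass fiber(1)]
  note \<pi>' = stack_measure_posteriors[OF finQ e sndD w'0 mass' fiber(2)]
  have "l1dist (e ` Q) (stack_measure Q e w fst) (stack_measure Q e w' snd)
      = (\<Sum>i\<in>I. \<Sum>j\<in>J. norm1 (\<lambda>k. \<gamma> i j * i k - \<delta> i j * j k))"
    unfolding l1dist_stack_measure[OF finQ e] by (simp add: Q_def w_def w'_def sum.cartesian_product')
  with \<pi> \<pi>' finQ show ?thesis by (intro that) auto
qed

theorem dstar_eq_inf_couplings:
  fixes u v :: "('k::finite \<Rightarrow> real) \<Rightarrow> real"
  assumes u: "u \<in> DeltaF" and v: "v \<in> DeltaF"
  shows "dstar u v = Inf {l1dist T \<pi> \<pi>' | (T :: nat set) \<pi> \<pi>'.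
           finite T \<and> \<pi> \<in> DeltaKS T \<and> \<pi>' \<in> DeltaKS T \<and> psi T \<pi> = u \<and> psi T \<pi>' = v}"
    (is "_ = Inf ?costs")
proof -
  define I where "I = {x. u x \<noteq> 0}"
  define J where "J = {x. v x \<noteq> 0}"
  obtain \<gamma> \<delta> where plan: "\<And>i j. i \<in> I \<Longrightarrow> j \<in> J \<Longrightarrow> 0 \<le> \<gamma> i j \<and> 0 \<le> \<delta> i j"
    "\<And>i. i \<in> I \<Longrightarrow> (\<Sum>j\<in>J. \<gamma> i j) = u i" "\<And>j. j \<in> J \<Longrightarrow> (\<Sum>i\<in>I. \<delta> i j) = v j"
    and cost: "(\<Sum>i\<in>I. \<Sum>j\<in>J. norm1 (\<lambda>k. \<gamma> i j * i k - \<delta> i j * j k)) \<le> dstar u v"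
    using optimal_plan_exists[OF u v] unfolding I_def J_def by blast
  have finI: "finite I" and I_sub: "I \<subseteq> DeltaK" and u_out: "\<And>x. x \<notin> I \<Longrightarrow> u x = 0"
    and u1: "sum u I = 1" using u by (auto simp: DeltaF_def I_def)
  have finJ: "finite J" and J_sub: "J \<subseteq> DeltaK" and v_out: "\<And>x. x \<notin> J \<Longrightarrow> v x = 0"
    and v1: "sum v J = 1" using v by (auto simp: DeltaF_def J_def)
  obtain T :: "nat set" and \<pi> \<pi>' where opt: "finite T" "\<pi> \<in> DeltaKS T" "\<pi>' \<in> DeltaKS T" "psi T \<pi> = u" "psi T \<pi>' = v"
    and "l1dist T \<pi> \<pi>' = (\<Sum>i\<in>I. \<Sum>j\<in>J. norm1 (\<lambda>k. \<gamma> i j * i k - \<delta> i j * j k))"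
    by (rule coupling_of_plan[OF finI finJ I_sub J_sub u_out v_out u1 v1 plan(1-3)])
  with cost have le: "l1dist T \<pi> \<pi>' \<le> dstar u v" by simp
  have lower: "dstar u v \<le> c" if "c \<in> ?costs" for c
  proof -
    from that obtain T' :: "nat set" and \<rho> \<rho>' where "c = l1dist T' \<rho> \<rho>'" "finite T'" "\<rho> \<in> DeltaKS T'" "\<rho>' \<in> DeltaKS T'"
      "psi T' \<rho> = u" "psi T' \<rho>' = v" by blast
    then show ?thesis using psi_lipschitz[of T' \<rho> \<rho>'] by simp
  qed
  have mem: "l1dist T \<pi> \<pi>' \<in> ?costs" using opt by blast
  have "Inf ?costs = l1dist T \<pi> \<pi>'"
    using le lower by (intro cInf_eq_minimum[OF mem]) (meson order_trans)
  then show ?thesis using le lower[OF mem] by simp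
qed

theorem proposition3:
  fixes S :: "'s set"
  shows "(finite S \<longrightarrow>
            (\<forall>\<pi>\<in>(DeltaKS S :: ('k::finite \<times> 's \<Rightarrow> real) set). \<forall>\<pi>'\<in>DeltaKS S.
               dstar (psi S \<pi>) (psi S \<pi>') \<le> l1dist S \<pi> \<pi>'))
       \<and> (\<forall>u\<in>(DeltaF :: (('k \<Rightarrow> real) \<Rightarrow> real) set). \<forall>v\<in>DeltaF.
            dstar u v = Inf {l1dist T \<pi> \<pi>' | (T :: nat set) \<pi> \<pi>'.
               finite T \<and> \<pi> \<in> DeltaKS T \<and> \<pi>' \<in> DeltaKS T \<and> psi T \<pi> = u \<and> psi T \<pi>' = v})"
  using psi_lipschitz dstar_eq_inf_couplings by blast

end
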